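(* In the isotropic setting below, let $F\in\mathrm{GL}^+(3)$ be fixed and $t\mapsto C_p(t)\in\mathrm{PSym}(3)$ be differentiable. Put $F_p(t)=\sqrt{C_p(t)}$, $F_e=FF_p^{-1}$, $B_e=F_eF_e^T=FC_p^{-1}F^T$, $\tau_e=DW(F_e)F_e^T$. Then $$\frac{d}{dt}\widetilde W\big(CC_p^{-1}(t)\big)=\frac12\Big\langle\tau_e,\;F\,\frac{d}{dt}[C_p^{-1}]\,F^T B_e^{-1}\Big\rangle.$$ If moreover at time $t$ one has $\mathrm{dev}_3\tau_e\neq0$ and the Simo–Miehe flow rule $\frac{d}{dt}[C_p^{-1}]=-2\lambda\,F^{-1}\big[\frac{\mathrm{dev}_3\tau_e}{\|\mathrm{dev}_3\tau_e\|}B_e\big]F^{-T}$ with $\lambda\ge0$, then $$\frac{d}{dt}\widetilde W\big(CC_p^{-1}(t)\big)=-\lambda\,\|\mathrm{dev}_3\tau_e\|\le0.$$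
   Context: $W:\mathrm{GL}^+(3)\to\mathbb{R}$ objective and isotropic ($W(QFR)=W(F)$, $Q,R\in\mathrm{SO}(3)$), written $W(F_e)=\Psi(I_1(C_e),I_2(C_e),I_3(C_e))$ with $\Psi\in C^1$, $C_e=F_e^TF_e$; $\widetilde W(X)=\Psi(\mathrm{tr}X,\mathrm{tr}(\mathrm{Cof}X),\det X)$, so that $W(F_e)=\widetilde W(CC_p^{-1})$ with $C=F^TF$. $\langle X,Y\rangle=\mathrm{tr}(XY^T)$, $\|\cdot\|$ Frobenius norm, $DW$ gradient, $\mathrm{dev}_3X=X-\frac13\mathrm{tr}(X)\mathbb{1}$. For isotropic $W$, $\tau_e$ is symmetric and commutes with $B_e$. *)

theory Defs
  imports "HOL-Analysis.Analysis"
begin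

type_synonym mat3 = "real^3^3"

text \<open>Cofactor matrix: entry (i,j) is the determinant of X with row i replaced by the j-th unit row
  (Laplace expansion), i.e. (-1)^(i+j) times the (i,j) minor.\<close>
definition Cof :: "mat3 \<Rightarrow> mat3" where
  "Cof X = (\<chi> i j. det (\<chi> k l. if k = i then (if l = j then 1 else 0) else X $ k $ l))"

definition psym :: "mat3 \<Rightarrow> bool" where
  "psym M \<longleftrightarrow> transpose M = M \<and> (\<forall>x::real^3. x \<noteq> 0 \<longrightarrow> x \<bullet> (M *v x) > 0)"

definition msqrt :: "mat3 \<Rightarrow> mat3" where
  "msqrt C = (THE S. psym S \<and> S ** S = C)"

text \<open>Gradient w.r.t. the Frobenius inner product (the inner product on real^3^3 is tr(X Y^T)).\<close>
definition grad :: "(mat3 \<Rightarrow> real) \<Rightarrow> mat3 \<Rightarrow> mat3" where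
  "grad W F = (SOME G. (W has_derivative (\<lambda>H. G \<bullet> H)) (at F))"

definition dev3 :: "mat3 \<Rightarrow> mat3" where
  "dev3 X = X - (trace X / 3) *\<^sub>R mat 1"

definition invariants :: "mat3 \<Rightarrow> real^3" where
  "invariants X = vector [trace X, trace (Cof X), det X]"

definition Wtilde :: "(real^3 \<Rightarrow> real) \<Rightarrow> mat3 \<Rightarrow> real" where
  "Wtilde \<Psi> X = \<Psi> (invariants X)"

end

theory Submission
  imports Defs
begin

text \<open>
  The energy along the path is
  \<open>s \<mapsto> \<Psi>(I(C C\<^sub>p(s)\<^sup>-\<^sup>1))\<close>.  Since the invariants \<open>I = (I\<^sub>1, I\<^sub>2, I\<^sub>3)\<close> satisfy \<open>I(AB) = I(BA)\<close>, this is
  \<open>h(F C\<^sub>p(s)\<^sup>-\<^sup>1 F\<^sup>T)\<close> with \<open>h = \<Psi> \<circ> I\<close>, so by the chain rule its derivative is \<open>L(K)\<close>, where \<open>L\<close> is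
  the derivative of \<open>h\<close> at \<open>B\<^sub>e = F C\<^sub>p\<^sup>-\<^sup>1 F\<^sup>T\<close> and \<open>K = F (d/dt C\<^sub>p\<^sup>-\<^sup>1) F\<^sup>T\<close> is symmetric.  On the
  other hand \<open>W(G) = h(G G\<^sup>T)\<close> for \<open>det G > 0\<close>, so \<open>\<langle>DW(F\<^sub>e), H\<rangle> = L(F\<^sub>e H\<^sup>T + H F\<^sub>e\<^sup>T)\<close>; testing
  with \<open>H = K B\<^sub>e\<^sup>-\<^sup>1 F\<^sub>e\<close> yields \<open>\<langle>\<tau>\<^sub>e, K B\<^sub>e\<^sup>-\<^sup>1\<rangle> = 2 L(K)\<close>, the first claim.  Under the Simo--Miehe flow
  rule \<open>K B\<^sub>e\<^sup>-\<^sup>1 = -2\<lambda> dev \<tau>\<^sub>e / |dev \<tau>\<^sub>e|\<close> and \<open>\<langle>\<tau>\<^sub>e, dev \<tau>\<^sub>e\<rangle> = |dev \<tau>\<^sub>e|\<^sup>2\<close>, giving the second.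
\<close>

lemma matrix_inv_works:
  fixes A :: "real^'n^'n"
  assumes "det A \<noteq> 0"
  shows "A ** matrix_inv A = mat 1" "matrix_inv A ** A = mat 1"
proof -
  have "\<exists>A'. A ** A' = mat 1 \<and> A' ** A = mat 1"
    using assms invertible_det_nz unfolding invertible_def by blast
  from someI_ex[OF this] show "A ** matrix_inv A = mat 1" "matrix_inv A ** A = mat 1"
    unfolding matrix_inv_def by auto
qed

lemma matrix_inv_unique:
  fixes A B :: "real^'n^'n"
  assumes "A ** B = mat 1"
  shows "matrix_inv A = B"
proof -
  have "det A * det B = 1" using assms by (metis det_I det_mul)
  then have "det A \<noteq> 0" by auto
  then have "matrix_inv A = matrix_inv A ** (A ** B)" using assms by simp
  also have "\<dots> = B" using matrix_inv_works[OF \<open>det A \<noteq> 0\<close>] by (simp add: matrix_mul_assoc)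
  finally show ?thesis .
qed

lemma matrix_inv_transpose:
  fixes A :: "real^'n^'n"
  assumes "det A \<noteq> 0"
  shows "matrix_inv (transpose A) = transpose (matrix_inv A)"
  by (rule matrix_inv_unique) (metis assms matrix_inv_works(2) matrix_transpose_mul transpose_mat)

lemma symmetric_matrix_inner:
  fixes A :: "real^'n^'n"
  assumes "transpose A = A"
  shows "x \<bullet> (A *v y) = (A *v x) \<bullet> y"
  by (metis assms dot_lmul_matrix transpose_matrix_vector)

lemma matrix_sub_ldistrib: "(A::real^'n^'m) ** (B - C) = A ** B - A ** C"
  by (simp add: vec_eq_iff matrix_matrix_mult_def sum_subtractf algebra_simps)

lemma matrix_sub_rdistrib: "((A::real^'n^'m) - B) ** C = A ** C - B ** C"
  by (simp add: vec_eq_iff matrix_matrix_mult_def sum_subtractf algebra_simps)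

lemma matrix_add_rdistrib: "((A::real^'n^'m) + B) ** C = A ** C + B ** C"
  by (simp add: vec_eq_iff matrix_matrix_mult_def sum.distrib algebra_simps)

lemma quadratic_form_congruence:
  fixes B M :: "real^'n^'n"
  shows "x \<bullet> ((B ** M ** transpose B) *v x) = (transpose B *v x) \<bullet> (M *v (transpose B *v x))"
  by (metis dot_lmul_matrix matrix_vector_mul_assoc transpose_matrix_vector)

lemma inner_matrix_mult_transpose:
  fixes A B M :: "real^'n^'n"
  shows "(A ** transpose B) \<bullet> M = A \<bullet> (M ** B)"
proof -
  have "(A ** transpose B) \<bullet> M = (\<Sum>i\<in>UNIV. \<Sum>k\<in>UNIV. \<Sum>j\<in>UNIV. A$i$j * B$k$j * M$i$k)"
    unfolding inner_vec_def matrix_matrix_mult_def transpose_def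
    by (simp add: sum_distrib_right)
  also have "\<dots> = (\<Sum>i\<in>UNIV. \<Sum>j\<in>UNIV. \<Sum>k\<in>UNIV. A$i$j * B$k$j * M$i$k)"
    by (rule sum.cong[OF refl], rule sum.swap)
  also have "\<dots> = A \<bullet> (M ** B)"
    unfolding inner_vec_def matrix_matrix_mult_def transpose_def
    by (simp add: sum_distrib_left mult_ac)
  finally show ?thesis .
qed

lemma inner_mat1_trace: "mat 1 \<bullet> (X::real^'n^'n) = trace X"
proof -
  have "mat 1 \<bullet> X = (\<Sum>i\<in>UNIV. \<Sum>j\<in>UNIV. if j = i then X$i$j else 0)"
    unfolding inner_vec_def mat_def by (intro sum.cong refl) auto
  then show ?thesis unfolding trace_def by simp
qed

subsection \<open>Spectral theorem for symmetric matrices\<close>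

text \<open>A quadratic form with no linear term that stays nonnegative on the whole line: used to
  show that a maximiser of the Rayleigh quotient is an eigenvector.\<close>
lemma nonneg_quadratic_no_linear_term:
  fixes c d :: real
  assumes "d \<ge> 0" and nonneg: "\<And>e. 0 \<le> 2*e*c + e^2*d"
  shows "c = 0"
proof (rule ccontr)
  assume "c \<noteq> 0"
  define q where "q = d + 1"
  have "q > 0" and d: "d = q - 1" using \<open>d \<ge> 0\<close> unfolding q_def by simp_all
  have "2*(-c/q)*c + (-c/q)^2*d = - (c^2 * (q + 1)) / q^2"
    unfolding d using \<open>q > 0\<close> by (simp add: field_simps power2_eq_square)
  also have "\<dots> < 0" using \<open>q > 0\<close> \<open>c \<noteq> 0\<close> by (simp add: divide_neg_pos)
  finally show False using nonneg[of "-c/q"] by simp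
qed

lemma rayleigh_maximizer_exists:
  fixes A :: "real^'n^'n" and U :: "(real^'n) set"
  assumes sub: "subspace U" and "z \<in> U" "z \<noteq> 0"
  shows "\<exists>x\<in>U. norm x = 1 \<and> (\<forall>v\<in>U. v \<bullet> (A *v v) \<le> (x \<bullet> (A *v x)) * (v \<bullet> v))"
proof -
  define f where "f = (\<lambda>x::real^'n. x \<bullet> (A *v x))"
  define K where "K = U \<inter> sphere 0 1"
  have "compact K" unfolding K_def
    by (metis Int_commute closed_subspace compact_Int_closed compact_sphere sub)
  moreover have "(1/norm z) *\<^sub>R z \<in> K" using assms unfolding K_def by (simp add: subspace_scale)
  moreover have "continuous_on K f" unfolding f_def
    by (intro continuous_intros linear_continuous_on matrix_vector_mul_linear)
  ultimately obtain x where x: "x \<in> K" "\<And>y. y \<in> K \<Longrightarrow> f y \<le> f x"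
    using continuous_attains_sup by (metis empty_iff)
  have "f v \<le> f x * (v \<bullet> v)" if "v \<in> U" for v
  proof (cases "v = 0")
    case True then show ?thesis by (simp add: f_def)
  next
    case False
    have "(1/norm v) *\<^sub>R v \<in> K" using False that sub unfolding K_def by (simp add: subspace_scale)
    then have "f ((1/norm v) *\<^sub>R v) \<le> f x" by (rule x(2))
    moreover have "f ((1/norm v) *\<^sub>R v) = f v / (norm v)^2"
      unfolding f_def by (simp add: matrix_vector_mult_scaleR power2_eq_square)
    ultimately have "f v / (norm v)^2 \<le> f x" by simp
    then show ?thesis using False by (simp add: divide_le_eq mult.commute power2_norm_eq_inner)
  qed
  then show ?thesis using x(1) unfolding K_def f_def by auto
qed

text \<open>A maximiser of the Rayleigh quotient on an invariant subspace is an eigenvector: perturbing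
  it by the defect \<open>y = \<mu> x - A x\<close> leads to a nonnegative quadratic with linear term \<open>|y|\<^sup>2\<close>.\<close>
lemma rayleigh_maximizer_eigenvector:
  fixes A :: "real^'n^'n"
  assumes sym: "transpose A = A" and sub: "subspace U" and inv: "\<And>x. x \<in> U \<Longrightarrow> A *v x \<in> U"
    and x: "x \<in> U" "norm x = 1"
    and max: "\<And>v. v \<in> U \<Longrightarrow> v \<bullet> (A *v v) \<le> \<mu> * (v \<bullet> v)"
    and \<mu>: "\<mu> = x \<bullet> (A *v x)"
  shows "A *v x = \<mu> *\<^sub>R x"
proof -
  define y where "y = \<mu> *\<^sub>R x - A *v x"
  have yU: "y \<in> U" unfolding y_def using x inv sub by (simp add: subspace_diff subspace_scale)
  have xx: "x \<bullet> x = 1" using x(2) by (simp add: norm_eq_sqrt_inner)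
  have Axy: "(A *v x) \<bullet> y = x \<bullet> (A *v y)" using symmetric_matrix_inner[OF sym, of x y] by simp
  have "0 \<le> 2*e*(y \<bullet> y) + e^2*(\<mu> * (y \<bullet> y) - y \<bullet> (A *v y))" for e
  proof -
    have "x + e *\<^sub>R y \<in> U" using x yU sub by (simp add: subspace_add subspace_scale)
    from max[OF this] show ?thesis
      using xx Axy unfolding y_def \<mu>
      by (simp add: matrix_vector_right_distrib matrix_vector_mult_scaleR matrix_vector_mult_diff_distrib
          inner_add_left inner_add_right inner_diff_left inner_diff_right
          power2_eq_square algebra_simps inner_commute)
  qed
  moreover have "0 \<le> \<mu> * (y \<bullet> y) - y \<bullet> (A *v y)" using max[OF yU] by simp
  ultimately have "y \<bullet> y = 0" using nonneg_quadratic_no_linear_term by blast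
  then show ?thesis unfolding y_def by simp
qed

lemma eigenvector_orthogonal_to:
  fixes A :: "real^'n^'n" and E :: "(real^'n) set"
  assumes sym: "transpose A = A" and eig: "\<And>e. e \<in> E \<Longrightarrow> \<exists>c. A *v e = c *\<^sub>R e"
    and "finite E" "card E < CARD('n)"
  shows "\<exists>x. norm x = 1 \<and> (\<forall>e\<in>E. x \<bullet> e = 0) \<and> A *v x = (x \<bullet> (A *v x)) *\<^sub>R x"
proof -
  define U where "U = {v. \<forall>e\<in>E. v \<bullet> e = 0}"
  have sub: "subspace U" unfolding U_def subspace_def by (auto simp: inner_add_left)
  have inv: "A *v v \<in> U" if "v \<in> U" for v
  proof -
    have "(A *v v) \<bullet> e = 0" if "e \<in> E" for e
    proof -
      obtain c where "A *v e = c *\<^sub>R e" using eig[OF \<open>e \<in> E\<close>] by blast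
      then show ?thesis using \<open>v \<in> U\<close> \<open>e \<in> E\<close> symmetric_matrix_inner[OF sym, of v e]
        unfolding U_def by simp
    qed
    then show ?thesis unfolding U_def by blast
  qed
  have "dim E < DIM(real^'n)" using dim_le_card'[OF \<open>finite E\<close>] \<open>card E < CARD('n)\<close> by simp
  then obtain z where "z \<noteq> 0" "\<And>y. y \<in> span E \<Longrightarrow> orthogonal z y"
    using orthogonal_to_subspace_exists by blast
  then have "z \<in> U" "z \<noteq> 0" unfolding U_def orthogonal_def by (auto intro: span_base)
  then obtain x where "x \<in> U" "norm x = 1" "\<forall>v\<in>U. v \<bullet> (A *v v) \<le> (x \<bullet> (A *v x)) * (v \<bullet> v)"
    using rayleigh_maximizer_exists[OF sub] by blast
  with rayleigh_maximizer_eigenvector[OF sym sub inv] show ?thesis unfolding U_def by blast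
qed

lemma orthonormal_eigenbasis3:
  fixes A :: "real^3^3"
  assumes sym: "transpose A = A"
  shows "\<exists>e::3 \<Rightarrow> real^3. (\<forall>j k. e j \<bullet> e k = (if j = k then 1 else 0))
           \<and> (\<forall>j. A *v e j = (e j \<bullet> (A *v e j)) *\<^sub>R e j)"
proof -
  obtain e1 where e1: "norm e1 = 1" "A *v e1 = (e1 \<bullet> (A *v e1)) *\<^sub>R e1"
    using eigenvector_orthogonal_to[OF sym, of "{}"] by auto
  obtain e2 where e2: "norm e2 = 1" "e2 \<bullet> e1 = 0" "A *v e2 = (e2 \<bullet> (A *v e2)) *\<^sub>R e2"
    using eigenvector_orthogonal_to[OF sym, of "{e1}"] e1 by auto
  have "card {e1, e2} < CARD(3)" by (simp add: card_insert_if)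
  then obtain e3 where e3: "norm e3 = 1" "e3 \<bullet> e1 = 0" "e3 \<bullet> e2 = 0"
      "A *v e3 = (e3 \<bullet> (A *v e3)) *\<^sub>R e3"
    using eigenvector_orthogonal_to[OF sym, of "{e1, e2}"] e1 e2 by fastforce
  define e where "e j = (if j = 1 then e1 else if j = 2 then e2 else e3)" for j :: 3
  have cases3: "j = 1 \<or> j = 2 \<or> j = 3" for j :: 3 using exhaust_3 by auto
  have "e j \<bullet> e k = (if j = k then 1 else 0)" for j k
    using cases3[of j] cases3[of k] e1 e2 e3
    by (auto simp: e_def inner_commute norm_eq_sqrt_inner)
  moreover have "A *v e j = (e j \<bullet> (A *v e j)) *\<^sub>R e j" for j
    using cases3[of j] e1 e2 e3 by (auto simp: e_def)
  ultimately show ?thesis by blast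
qed

definition diagm :: "(3 \<Rightarrow> real) \<Rightarrow> real^3^3" where
  "diagm m = (\<chi> i j. if i = j then m i else 0)"

lemma spectral3:
  fixes A :: "real^3^3"
  assumes sym: "transpose A = A"
  shows "\<exists>V m. orthogonal_matrix V \<and> A = V ** diagm m ** transpose V
     \<and> (\<forall>j. m j = column j V \<bullet> (A *v column j V))"
proof -
  obtain e :: "3 \<Rightarrow> real^3" where orth: "\<forall>j k. e j \<bullet> e k = (if j = k then 1 else 0)"
    and eig: "\<forall>j. A *v e j = (e j \<bullet> (A *v e j)) *\<^sub>R e j"
    using orthonormal_eigenbasis3[OF sym] by blast
  define V where "V = (\<chi> i j. e j $ i)"
  define m where "m j = e j \<bullet> (A *v e j)" for j
  have col: "column j V = e j" for j unfolding V_def column_def by (simp add: vec_eq_iff)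
  have "transpose V ** V = mat 1"
    using orth by (simp add: vec_eq_iff mat_def V_def matrix_matrix_mult_def transpose_def inner_vec_def)
  then have orthV: "orthogonal_matrix V" by (simp add: orthogonal_matrix)
  have AV: "A ** V = V ** diagm m"
  proof -
    have "(A ** V)$i$j = (V ** diagm m)$i$j" for i j
    proof -
      have "(A ** V)$i$j = (A *v e j)$i"
        unfolding V_def matrix_matrix_mult_def matrix_vector_mult_def by simp
      also have "\<dots> = (\<Sum>k\<in>UNIV. e k $ i * (if k = j then m k else 0))"
        by (subst eig[rule_format]) (simp add: m_def if_distrib cong: if_cong)
      also have "\<dots> = (V ** diagm m)$i$j" unfolding V_def diagm_def matrix_matrix_mult_def by simp
      finally show ?thesis .
    qed
    then show ?thesis by (simp add: vec_eq_iff)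
  qed
  have "A = A ** (V ** transpose V)" using orthV by (simp add: orthogonal_matrix_def)
  also have "\<dots> = V ** diagm m ** transpose V" using AV by (simp add: matrix_mul_assoc)
  finally have "A = V ** diagm m ** transpose V" .
  then show ?thesis using orthV col by (intro exI[of _ V] exI[of _ m]) (simp add: m_def)
qed

lemma diagm_mult: "diagm a ** diagm b = diagm (\<lambda>i. a i * b i)"
proof -
  have "(\<Sum>k\<in>UNIV. (if i = k then a i else 0) * (if k = j then b k else 0))
      = (if i = j then a i * b i else 0)" for i j :: 3
  proof -
    have "(\<Sum>k\<in>UNIV. (if i = k then a i else 0) * (if k = j then b k else 0))
        = (\<Sum>k\<in>UNIV. if k = i then (if k = j then a i * b k else 0) else 0)"
      by (rule sum.cong) auto
    then show ?thesis by simp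
  qed
  then show ?thesis unfolding diagm_def matrix_matrix_mult_def by (simp add: vec_eq_iff)
qed

lemma diagm_transpose: "transpose (diagm a) = diagm a"
  unfolding diagm_def transpose_def by (simp add: vec_eq_iff)

lemma det_diagm: "det (diagm a) = a 1 * a 2 * a 3"
  unfolding diagm_def by (simp add: det_3)

lemma trace_diagm: "trace (diagm a) = a 1 + a 2 + a 3"
  unfolding diagm_def trace_def by (simp add: sum_3)

lemma quadratic_form_diagm: "y \<bullet> (diagm a *v y) = (\<Sum>i\<in>UNIV. a i * (y$i)^2)"
proof -
  have "(\<Sum>j\<in>UNIV. y $ j * (if i = j then a i else 0)) = y$i * a i" for i
  proof -
    have "(\<Sum>j\<in>UNIV. y $ j * (if i = j then a i else 0)) = (\<Sum>j\<in>UNIV. if j = i then y $ j * a i else 0)"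
      by (rule sum.cong) auto
    then show ?thesis by simp
  qed
  then show ?thesis unfolding diagm_def matrix_vector_mult_def inner_vec_def
    by (simp add: power2_eq_square mult_ac)
qed

subsection \<open>Positive definite matrices and their square roots\<close>

lemma spectral3_pos:
  fixes A :: "real^3^3"
  assumes "psym A"
  shows "\<exists>V m. orthogonal_matrix V \<and> A = V ** diagm m ** transpose V \<and> (\<forall>j. m j > 0)"
proof -
  have "transpose A = A" using assms unfolding psym_def by simp
  then obtain V m where V: "orthogonal_matrix V" "A = V ** diagm m ** transpose V"
    and m: "\<And>j. m j = column j V \<bullet> (A *v column j V)"
    using spectral3 by blast
  have col: "column j V \<noteq> 0" for j
  proof
    assume "column j V = 0"
    then have "(transpose V ** V)$j$j = 0"
      by (simp add: matrix_matrix_mult_def transpose_def column_def vec_eq_iff)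
    then show False using V(1) by (simp add: orthogonal_matrix mat_def)
  qed
  have "m j > 0" for j using assms m[of j] col[of j] unfolding psym_def by simp
  with V show ?thesis by blast
qed

lemma orthogonal_matrix_transpose_nonzero:
  fixes V :: "real^'n^'n"
  assumes "orthogonal_matrix V" "x \<noteq> 0"
  shows "transpose V *v x \<noteq> 0"
proof
  assume "transpose V *v x = 0"
  then have "(V ** transpose V) *v x = 0" by (simp add: matrix_vector_mul_assoc[symmetric])
  then show False using assms by (simp add: orthogonal_matrix_def)
qed

text \<open>Existence of a positive definite square root, with positive determinant: take the
  square roots of the eigenvalues.\<close>
lemma psym_sqrt_exists:
  fixes A :: "real^3^3"
  assumes "psym A"
  shows "\<exists>S. psym S \<and> S ** S = A \<and> det S > 0"
proof -
  obtain V m where V: "orthogonal_matrix V" "A = V ** diagm m ** transpose V" and m: "\<And>j. m j > 0"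
    using spectral3_pos[OF assms] by blast
  have VV: "transpose V ** V = mat 1" using V(1) by (simp add: orthogonal_matrix_def)
  define r where "r j = sqrt (m j)" for j
  define S where "S = V ** diagm r ** transpose V"
  have "S ** S = V ** (diagm r ** (transpose V ** V) ** diagm r) ** transpose V"
    unfolding S_def by (simp add: matrix_mul_assoc)
  also have "\<dots> = A" using VV V(2) m[THEN less_imp_le] by (simp add: diagm_mult r_def)
  finally have SS: "S ** S = A" .
  have symS: "transpose S = S" unfolding S_def
    by (simp add: matrix_transpose_mul diagm_transpose matrix_mul_assoc)
  have pd: "x \<bullet> (S *v x) > 0" if x: "x \<noteq> 0" for x
  proof -
    let ?y = "transpose V *v x"
    obtain i where i: "?y $ i \<noteq> 0"
      using orthogonal_matrix_transpose_nonzero[OF V(1) x] by (auto simp: vec_eq_iff)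
    have "x \<bullet> (S *v x) = (\<Sum>j\<in>UNIV. r j * (?y$j)^2)"
      unfolding S_def quadratic_form_congruence quadratic_form_diagm ..
    also have "\<dots> > 0"
      using i m by (intro sum_pos2[where i=i]) (auto simp: r_def less_imp_le)
    finally show ?thesis .
  qed
  have "det V * det V = 1" using VV by (metis det_I det_mul det_transpose)
  then have "det S = r 1 * r 2 * r 3" unfolding S_def by (simp add: det_mul det_diagm)
  also have "\<dots> > 0" using m unfolding r_def by simp
  finally show ?thesis using SS symS pd unfolding psym_def by blast
qed

lemma psym_trace_congruence:
  fixes X M :: "real^3^3"
  assumes "psym M"
  shows "trace (transpose X ** (M ** X)) \<ge> 0"
    and "trace (transpose X ** (M ** X)) = 0 \<Longrightarrow> X = 0"
proof -
  have tr: "trace (transpose X ** (M ** X)) = (\<Sum>k\<in>UNIV. column k X \<bullet> (M *v column k X))"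
    unfolding trace_def matrix_matrix_mult_def transpose_def inner_vec_def matrix_vector_mult_def
      column_def by simp
  have nn: "column k X \<bullet> (M *v column k X) \<ge> 0" for k
    using assms unfolding psym_def by (cases "column k X = 0") (auto intro: less_imp_le)
  then show "trace (transpose X ** (M ** X)) \<ge> 0" unfolding tr by (simp add: sum_nonneg)
  assume "trace (transpose X ** (M ** X)) = 0"
  then have "\<forall>k\<in>UNIV. column k X \<bullet> (M *v column k X) = 0"
    unfolding tr using nn by (subst sum_nonneg_eq_0_iff[symmetric]) auto
  then have "column k X = 0" for k using assms unfolding psym_def by (metis less_irrefl UNIV_I)
  then show "X = 0" by (simp add: vec_eq_iff column_def)
qed

text \<open>Uniqueness of the positive definite square root: for \<open>D = S - T\<close> one has
  \<open>S D + D T = 0\<close>, and pairing with \<open>D\<close> gives a sum of two nonnegative traces.\<close>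
lemma psym_sqrt_unique:
  fixes S T :: "real^3^3"
  assumes S: "psym S" and T: "psym T" and eq: "S ** S = T ** T"
  shows "S = T"
proof -
  define D where "D = S - T"
  have symD: "transpose D = D" using S T unfolding psym_def D_def by (simp add: transpose_def vec_eq_iff)
  have "S ** D + D ** T = 0" using eq unfolding D_def matrix_sub_ldistrib matrix_sub_rdistrib by simp
  then have "trace (D ** (S ** D + D ** T)) = 0" by (simp add: trace_def)
  then have "trace (D ** (S ** D)) + trace (D ** (D ** T)) = 0"
    by (simp add: matrix_add_ldistrib trace_add)
  then have "trace (transpose D ** (S ** D)) + trace (transpose D ** (T ** D)) = 0"
    using trace_mul_sym[of D "D ** T"] symD by (simp add: matrix_mul_assoc)
  then have "trace (transpose D ** (S ** D)) = 0"
    using psym_trace_congruence(1)[OF S, of D] psym_trace_congruence(1)[OF T, of D] by linarith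
  then have "D = 0" using psym_trace_congruence(2)[OF S] by blast
  then show ?thesis unfolding D_def by simp
qed

lemma msqrt:
  fixes A :: "real^3^3"
  assumes "psym A"
  shows "psym (msqrt A)" "msqrt A ** msqrt A = A" "det (msqrt A) > 0"
proof -
  obtain S where S: "psym S" "S ** S = A" "det S > 0" using psym_sqrt_exists[OF assms] by blast
  have "msqrt A = S" unfolding msqrt_def
    by (rule the_equality) (use S psym_sqrt_unique in auto)
  with S show "psym (msqrt A)" "msqrt A ** msqrt A = A" "det (msqrt A) > 0" by auto
qed

lemma psym_det_nonzero:
  fixes A :: "real^3^3"
  assumes "psym A"
  shows "det A \<noteq> 0"
proof -
  have "det A = det (msqrt A) * det (msqrt A)" using msqrt(2)[OF assms] by (metis det_mul)
  then show ?thesis using msqrt(3)[OF assms] by simp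
qed

subsection \<open>The principal invariants\<close>

lemma trace_Cof: "trace (Cof X) = ((trace X)^2 - trace (X ** X)) / 2"
  unfolding Cof_def trace_def
  by (simp add: sum_3 det_3 matrix_matrix_mult_def power2_eq_square algebra_simps)

text \<open>The invariants only see \<open>AB\<close> up to cyclic permutation; in particular
  \<open>I(C C\<^sub>p\<^sup>-\<^sup>1) = I(F C\<^sub>p\<^sup>-\<^sup>1 F\<^sup>T)\<close> and \<open>I(G\<^sup>T G) = I(G G\<^sup>T)\<close>.\<close>
lemma invariants_mult_commute: "invariants (A ** B) = invariants (B ** A)"
proof -
  have "trace ((A ** B) ** (A ** B)) = trace ((B ** A) ** (B ** A))"
    by (metis matrix_mul_assoc trace_mul_sym)
  then show ?thesis
    unfolding invariants_def by (simp add: trace_Cof trace_mul_sym[of A B] det_mul mult.commute)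
qed

text \<open>The invariants of a positive definite matrix lie in the open positive octant, where
  \<open>\<Psi>\<close> is differentiable.\<close>
lemma invariants_psym_pos:
  assumes "psym B"
  shows "invariants B $ i > 0"
proof -
  obtain V m where V: "orthogonal_matrix V" "B = V ** diagm m ** transpose V" and m: "\<And>j. m j > 0"
    using spectral3_pos[OF assms] by blast
  have "invariants B = invariants (transpose V ** (V ** diagm m))"
    using V(2) invariants_mult_commute by metis
  also have "\<dots> = invariants (diagm m)"
    using V(1) by (simp add: matrix_mul_assoc orthogonal_matrix_def)
  finally have iB: "invariants B = invariants (diagm m)" .
  have tr2: "trace (Cof (diagm m)) = m 1 * m 2 + m 1 * m 3 + m 2 * m 3"
    unfolding trace_Cof diagm_mult trace_diagm by (simp add: power2_eq_square algebra_simps)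
  have "i = 1 \<or> i = 2 \<or> i = 3" using exhaust_3 by auto
  then show ?thesis unfolding iB using m[of 1] m[of 2] m[of 3]
    by (auto simp: invariants_def trace_diagm tr2 det_diagm add_pos_pos)
qed

lemma bounded_linear_transpose: "bounded_linear (transpose :: real^'n^'m \<Rightarrow> real^'m^'n)"
  by (simp add: linear_conv_bounded_linear[symmetric] linearI transpose_def vec_eq_iff)

lemma polynomial_function_vec:
  fixes f :: "'a::real_normed_vector \<Rightarrow> 'b::euclidean_space ^'n"
  assumes "\<And>i. polynomial_function (\<lambda>x. f x $ i)"
  shows "polynomial_function f"
  unfolding polynomial_function_iff_Basis_inner
proof
  fix b :: "'b^'n" assume "b \<in> Basis"
  then obtain i u where b: "b = axis i u" "u \<in> Basis" unfolding Basis_vec_def by auto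
  have "(\<lambda>x. f x \<bullet> b) = (\<lambda>x. f x $ i \<bullet> u)" unfolding b inner_axis ..
  then show "real_polynomial_function (\<lambda>x. f x \<bullet> b)"
    using polynomial_function_inner[OF assms[of i], of u]
    by (simp add: real_polynomial_function_eq)
qed

lemma polynomial_function_entry: "polynomial_function (\<lambda>X::real^'n^'m. X$i$j)"
  by (rule polynomial_function_bounded_linear)
     (rule bounded_linear_compose[OF bounded_linear_vec_nth bounded_linear_vec_nth])

lemma polynomial_function_entry_if:
  "polynomial_function (\<lambda>X::real^'n^'m. if P then c else X$i$j)"
  by (cases P) (simp_all add: polynomial_function_entry)

lemma polynomial_function_det:
  fixes f :: "'a::real_normed_vector \<Rightarrow> real^'n^'n"
  assumes "\<And>i j. polynomial_function (\<lambda>x. f x $ i $ j)"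
  shows "polynomial_function (\<lambda>x. det (f x))"
proof -
  have "real_polynomial_function
      (\<lambda>x. \<Sum>p\<in>{p. p permutes UNIV}. of_int (sign p) * (\<Prod>i\<in>UNIV. f x $ i $ p i))"
    using assms by (intro real_polynomial_function_sum real_polynomial_function_prod
        real_polynomial_function.intros(3,4) real_polynomial_function.intros(2))
       (auto simp: real_polynomial_function_eq)
  then show ?thesis unfolding det_def real_polynomial_function_eq .
qed

lemma polynomial_function_Cof: "polynomial_function Cof"
  unfolding Cof_def
  by (intro polynomial_function_vec, simp, rule polynomial_function_det,
      simp add: polynomial_function_entry_if)

lemma polynomial_function_invariants: "polynomial_function invariants"
proof (rule polynomial_function_vec)
  fix i :: 3
  have trace: "polynomial_function (\<lambda>X::real^3^3. trace X)"
    unfolding trace_def by (intro polynomial_function_sum polynomial_function_entry) auto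
  have "polynomial_function (\<lambda>X. trace (Cof X))"
    using polynomial_function_compose[OF polynomial_function_Cof trace[unfolded o_def]]
    by (simp add: o_def)
  moreover have "polynomial_function (\<lambda>X::real^3^3. det X)"
    by (rule polynomial_function_det) (rule polynomial_function_entry)
  moreover have "i = 1 \<or> i = 2 \<or> i = 3" using exhaust_3 by auto
  ultimately show "polynomial_function (\<lambda>x. invariants x $ i)"
    using trace by (auto simp: invariants_def)
qed

lemma matrix_inv_Cof:
  fixes A :: "real^3^3"
  assumes "det A \<noteq> 0"
  shows "matrix_inv A = (1 / det A) *\<^sub>R Cof (transpose A)"
proof -
  have "matrix_inv A $ r $ k = ((1 / det A) *\<^sub>R Cof (transpose A)) $ r $ k" for r k
  proof -
    have "A *v (matrix_inv A *v axis k 1) = axis k 1"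
      using matrix_inv_works(1)[OF assms] by (metis matrix_vector_mul_assoc matrix_vector_mul_lid)
    then have "(matrix_inv A *v axis k 1) $ r
        = det (\<chi> i j. if j = r then axis k 1 $ i else A$i$j) / det A"
      using cramer[OF assms] by simp
    moreover have "(matrix_inv A *v axis k 1) $ r = matrix_inv A $ r $ k"
      unfolding matrix_vector_mult_def axis_def by (simp add: if_distrib cong: if_cong)
    moreover have "transpose (\<chi> i j. if j = r then axis k 1 $ i else A$i$j)
        = (\<chi> i j. if i = r then (if j = k then 1 else 0) else transpose A $ i $ j)"
      by (simp add: transpose_def axis_def vec_eq_iff)
    then have "det (\<chi> i j. if j = r then axis k 1 $ i else A$i$j) = Cof (transpose A) $ r $ k"
      unfolding Cof_def by (metis (no_types, lifting) det_transpose vec_lambda_beta)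
    ultimately show ?thesis by simp
  qed
  then show ?thesis by (simp add: vec_eq_iff)
qed

lemma matrix_inv_differentiable:
  fixes Y :: "real \<Rightarrow> real^3^3"
  assumes "\<And>s. det (Y s) \<noteq> 0" "Y differentiable (at t)"
  shows "(\<lambda>s. matrix_inv (Y s)) differentiable (at t)"
proof -
  have eq: "(\<lambda>s. matrix_inv (Y s)) = (\<lambda>s. inverse (det (Y s)) *\<^sub>R Cof (transpose (Y s)))"
    using matrix_inv_Cof[OF assms(1)] by (simp add: divide_inverse)
  have "polynomial_function (\<lambda>X::real^3^3. det X)"
    by (rule polynomial_function_det) (rule polynomial_function_entry)
  then have "(\<lambda>s. det (Y s)) differentiable (at t)"
    using differentiable_chain_at[OF assms(2) differentiable_at_polynomial_function] by (simp add: o_def)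
  moreover have "polynomial_function (\<lambda>X::real^3^3. Cof (transpose X))"
    using polynomial_function_compose[OF polynomial_function_bounded_linear[OF bounded_linear_transpose]
        polynomial_function_Cof] by (simp add: o_def)
  then have "(\<lambda>s. Cof (transpose (Y s))) differentiable (at t)"
    using differentiable_chain_at[OF assms(2) differentiable_at_polynomial_function] by (simp add: o_def)
  ultimately show ?thesis unfolding eq using assms(1) by simp
qed

text \<open>\<open>GL\<^sup>+(3)\<close> is open, so \<open>W\<close> is determined by \<open>\<Psi>\<close> near every \<open>F\<^sub>e\<close>.\<close>
lemma open_det_pos: "open {G::real^3^3. det G > 0}"
proof -
  have "continuous_on UNIV (\<lambda>G::real^3^3. det G)"
    by (rule differentiable_imp_continuous_on, rule differentiable_on_polynomial_function,
        rule polynomial_function_det, rule polynomial_function_entry)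
  then show ?thesis using open_Collect_less[of "\<lambda>_. 0" "\<lambda>G::real^3^3. det G"] by simp
qed

lemma bounded_bilinear_matrix_mult:
  "bounded_bilinear (\<lambda>(A::real^'n^'n) (B::real^'n^'n). A ** B)"
proof -
  have "bilinear (\<lambda>(A::real^'n^'n) (B::real^'n^'n). A ** B)"
    unfolding bilinear_def
    by (auto intro!: linearI simp: matrix_add_ldistrib matrix_add_rdistrib
        scalar_matrix_assoc matrix_scalar_ac)
  then show ?thesis using bilinear_conv_bounded_bilinear by blast
qed

lemma bounded_linear_sandwich: "bounded_linear (\<lambda>M::real^'n^'n. A ** M ** B)"
  by (simp add: linear_conv_bounded_linear[symmetric] linearI matrix_add_ldistrib
      matrix_add_rdistrib scalar_matrix_assoc matrix_scalar_ac)

lemma left_Cauchy_Green_has_derivative: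
  "((\<lambda>G::real^'n^'n. G ** transpose G) has_derivative
     (\<lambda>H. G0 ** transpose H + H ** transpose G0)) (at G0)"
  using bounded_bilinear.FDERIV[OF bounded_bilinear_matrix_mult has_derivative_id
      bounded_linear.has_derivative[OF bounded_linear_transpose has_derivative_id]]
  by simp

lemma grad_eq_derivative:
  fixes W :: "real^3^3 \<Rightarrow> real"
  assumes W: "(W has_derivative D) (at X)"
  shows "grad W X \<bullet> H = D H"
proof -
  have "linear D" using has_derivative_linear[OF W] .
  then have "(\<lambda>H. adjoint D 1 \<bullet> H) = D"
    by (auto simp: adjoint_works inner_commute)
  with W have "\<exists>G. (W has_derivative (\<lambda>H. G \<bullet> H)) (at X)" by metis
  then have "(W has_derivative (\<lambda>H. grad W X \<bullet> H)) (at X)" unfolding grad_def by (rule someI_ex)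
  with W have "(\<lambda>H. grad W X \<bullet> H) = D" using has_derivative_unique by blast
  then show ?thesis by metis
qed

lemma grad_via_left_Cauchy_Green:
  fixes W h :: "real^3^3 \<Rightarrow> real"
  assumes "open S" "G0 \<in> S" and W: "\<And>G. G \<in> S \<Longrightarrow> W G = h (G ** transpose G)"
    and h: "(h has_derivative L) (at (G0 ** transpose G0))"
  shows "grad W G0 \<bullet> H = L (G0 ** transpose H + H ** transpose G0)"
proof -
  have "((\<lambda>G. h (G ** transpose G)) has_derivative
      (\<lambda>H. L (G0 ** transpose H + H ** transpose G0))) (at G0)"
    using has_derivative_compose[OF left_Cauchy_Green_has_derivative h] by (simp add: o_def)
  then have "(W has_derivative (\<lambda>H. L (G0 ** transpose H + H ** transpose G0))) (at G0)"
    by (rule has_derivative_transform_within_open) (use assms in auto)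
  then show ?thesis by (rule grad_eq_derivative)
qed

lemma has_real_derivative_sandwich:
  fixes h :: "real^'n^'n \<Rightarrow> real"
  assumes Y: "(Y has_vector_derivative Y') (at t)"
    and h: "(h has_derivative L) (at (F ** Y t ** transpose F))"
  shows "((\<lambda>s. h (F ** Y s ** transpose F)) has_real_derivative L (F ** Y' ** transpose F)) (at t)"
proof -
  interpret L: bounded_linear L using has_derivative_bounded_linear[OF h] .
  have "((\<lambda>s. F ** Y s ** transpose F) has_derivative (\<lambda>x. x *\<^sub>R (F ** Y' ** transpose F))) (at t)"
    using bounded_linear.has_vector_derivative[OF bounded_linear_sandwich Y]
    unfolding has_vector_derivative_def .
  from has_derivative_compose[OF this h]
  have "((\<lambda>s. h (F ** Y s ** transpose F)) has_derivative
      (\<lambda>x. L (F ** Y' ** transpose F) * x)) (at t)"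
    by (simp add: o_def L.scaleR mult.commute)
  then show ?thesis by (simp add: has_field_derivative_def)
qed

lemma matrix_inv_curve_derivative:
  fixes Cp :: "real \<Rightarrow> real^3^3" and t :: real
  assumes psym: "\<And>s. psym (Cp s)" and diff: "\<And>s. Cp differentiable (at s)"
  defines "D \<equiv> vector_derivative (\<lambda>s. matrix_inv (Cp s)) (at t)"
  shows "((\<lambda>s. matrix_inv (Cp s)) has_vector_derivative D) (at t)" and "transpose D = D"
proof -
  show Y: "((\<lambda>s. matrix_inv (Cp s)) has_vector_derivative D) (at t)"
    using matrix_inv_differentiable[OF psym_det_nonzero[OF psym] diff] vector_derivative_works
    unfolding D_def by blast
  have "transpose (matrix_inv (Cp s)) = matrix_inv (Cp s)" for s
  proof -
    have "transpose (Cp s) = Cp s" using psym[of s] by (simp add: psym_def)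
    then show ?thesis using matrix_inv_transpose[OF psym_det_nonzero[OF psym[of s]]] by simp
  qed
  then show "transpose D = D"
    using bounded_linear.has_vector_derivative[OF bounded_linear_transpose Y]
      Y vector_derivative_unique_at by simp
qed

subsection \<open>Elastic kinematics and the Kirchhoff stress\<close>

lemma elastic_kinematics:
  fixes F Cp :: "real^3^3"
  assumes "det F > 0" "psym Cp"
  defines "Fe \<equiv> F ** matrix_inv (msqrt Cp)"
  shows "det Fe > 0" "Fe ** transpose Fe = F ** matrix_inv Cp ** transpose F"
    "psym (Fe ** transpose Fe)"
proof -
  define P where "P = msqrt Cp"
  have P: "psym P" "P ** P = Cp" "det P > 0" using msqrt[OF assms(2)] unfolding P_def by auto
  have iP: "P ** matrix_inv P = mat 1" "matrix_inv P ** P = mat 1"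
    using matrix_inv_works[of P] P(3) by auto
  have "det P * det (matrix_inv P) = 1" using iP(1) by (metis det_I det_mul)
  then have "det (matrix_inv P) > 0" using P(3) by (metis zero_less_mult_pos zero_less_one)
  then show detFe: "det Fe > 0" unfolding Fe_def P_def using assms(1) by (simp add: det_mul)
  have symiP: "transpose (matrix_inv P) = matrix_inv P"
    using matrix_inv_transpose[of P] P(1,3) unfolding psym_def by simp
  have "Cp ** (matrix_inv P ** matrix_inv P) = P ** (P ** matrix_inv P) ** matrix_inv P"
    using P(2) by (simp add: matrix_mul_assoc)
  then have "matrix_inv Cp = matrix_inv P ** matrix_inv P"
    using iP by (intro matrix_inv_unique) simp
  then show "Fe ** transpose Fe = F ** matrix_inv Cp ** transpose F"
    unfolding Fe_def P_def[symmetric] by (simp add: matrix_transpose_mul symiP matrix_mul_assoc)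
  show "psym (Fe ** transpose Fe)"
    unfolding psym_def
  proof (intro conjI allI impI)
    show "transpose (Fe ** transpose Fe) = Fe ** transpose Fe" by (simp add: matrix_transpose_mul)
    fix x :: "real^3" assume "x \<noteq> 0"
    have "invertible (transpose Fe)" using detFe by (simp add: invertible_det_nz)
    then have "transpose Fe *v x \<noteq> 0"
      using \<open>x \<noteq> 0\<close> inj_matrix_vector_mult[of "transpose Fe"] by (metis injD matrix_vector_mult_0_right)
    then show "x \<bullet> ((Fe ** transpose Fe) *v x) > 0"
      using quadratic_form_congruence[of x Fe "mat 1"] by simp
  qed
qed

text \<open>Key identity: if \<open>\<langle>g, H\<rangle> = L(G H\<^sup>T + H G\<^sup>T)\<close> then for symmetric \<open>K\<close> the Kirchhoff-type
  stress \<open>g G\<^sup>T\<close> satisfies \<open>\<langle>g G\<^sup>T, K (G G\<^sup>T)\<^sup>-\<^sup>1\<rangle> = 2 L(K)\<close> (test with \<open>H = K (G G\<^sup>T)\<^sup>-\<^sup>1 G\<close>).\<close>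
lemma stress_pairing:
  fixes g G K :: "real^'n^'n"
  assumes grad: "\<And>H. g \<bullet> H = L (G ** transpose H + H ** transpose G)"
    and "linear L" and symK: "transpose K = K" and "det G \<noteq> 0"
  shows "(g ** transpose G) \<bullet> (K ** matrix_inv (G ** transpose G)) = 2 * L K"
proof -
  define B where "B = G ** transpose G"
  have "det B \<noteq> 0" unfolding B_def using \<open>det G \<noteq> 0\<close> by (simp add: det_mul)
  note iB = matrix_inv_works[OF this]
  have symiB: "transpose (matrix_inv B) = matrix_inv B"
    using matrix_inv_transpose[OF \<open>det B \<noteq> 0\<close>] unfolding B_def by (simp add: matrix_transpose_mul)
  have KB: "K ** matrix_inv B ** B = K" using iB(2) by (simp add: matrix_mul_assoc[symmetric])
  have "(g ** transpose G) \<bullet> (K ** matrix_inv B) = g \<bullet> (K ** matrix_inv B ** G)"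
    by (rule inner_matrix_mult_transpose)
  also have "\<dots> = L (B ** matrix_inv B ** K + K ** matrix_inv B ** B)"
    unfolding grad B_def by (simp add: matrix_transpose_mul symK symiB[unfolded B_def] matrix_mul_assoc)
  also have "\<dots> = L (K + K)" by (simp only: iB(1) KB matrix_mul_lid)
  also have "\<dots> = L K + L K" by (rule linear_add[OF \<open>linear L\<close>])
  finally show ?thesis unfolding B_def by simp
qed

lemma strain_energy_has_derivative:
  fixes \<Psi> :: "real^3 \<Rightarrow> real" and B :: "real^3^3"
  assumes Psi_C1: "\<And>x. (\<forall>i. 0 < x $ i) \<Longrightarrow> (\<Psi> has_derivative (\<lambda>h. \<Psi>' x \<bullet> h)) (at x)"
    and "psym B"
  shows "((\<lambda>X. \<Psi> (invariants X)) has_derivative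
           (\<lambda>K. \<Psi>' (invariants B) \<bullet> frechet_derivative invariants (at B) K)) (at B)"
proof -
  have "(invariants has_derivative frechet_derivative invariants (at B)) (at B)"
    using differentiable_at_polynomial_function[OF polynomial_function_invariants]
      frechet_derivative_works by blast
  moreover have "(\<Psi> has_derivative (\<lambda>h. \<Psi>' (invariants B) \<bullet> h)) (at (invariants B))"
    using Psi_C1 invariants_psym_pos[OF \<open>psym B\<close>] by blast
  ultimately show ?thesis using has_derivative_compose by blast
qed

subsection \<open>The Simo--Miehe flow rule\<close>

text \<open>The deviator is orthogonal to the identity, so \<open>\<langle>\<tau>, dev \<tau>\<rangle> = |dev \<tau>|\<^sup>2\<close>.\<close>
lemma inner_dev3_self: "\<tau> \<bullet> dev3 \<tau> = (norm (dev3 \<tau>))^2"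
proof -
  have "mat 1 \<bullet> dev3 \<tau> = 0"
    unfolding inner_mat1_trace dev3_def by (simp add: trace_sub trace_def sum_3 mat_def field_simps)
  moreover have "\<tau> = dev3 \<tau> + (trace \<tau> / 3) *\<^sub>R mat 1" unfolding dev3_def by simp
  then have "\<tau> \<bullet> dev3 \<tau> = dev3 \<tau> \<bullet> dev3 \<tau> + (trace \<tau> / 3) * (mat 1 \<bullet> dev3 \<tau>)"
    by (metis inner_add_left inner_scaleR_left)
  ultimately show ?thesis by (simp add: power2_norm_eq_inner)
qed

text \<open>Under the flow rule the pairing \<open>1/2 \<langle>\<tau>, F D F\<^sup>T B\<^sup>-\<^sup>1\<rangle>\<close> reduces to \<open>-\<lambda>|dev \<tau>|\<close>, since
  \<open>F D F\<^sup>T B\<^sup>-\<^sup>1 = -2\<lambda> dev \<tau> / |dev \<tau>|\<close>.\<close>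
lemma flow_rule_dissipation:
  fixes \<tau> F B D :: "real^3^3"
  assumes "det F \<noteq> 0" "det B \<noteq> 0" "dev3 \<tau> \<noteq> 0"
    and D: "D = (-2 * lam) *\<^sub>R (matrix_inv F ** (((1 / norm (dev3 \<tau>)) *\<^sub>R dev3 \<tau>) ** B)
                                 ** transpose (matrix_inv F))"
  shows "(1/2) * (\<tau> \<bullet> (F ** D ** transpose F ** matrix_inv B)) = - lam * norm (dev3 \<tau>)"
proof -
  define N where "N = (1 / norm (dev3 \<tau>)) *\<^sub>R dev3 \<tau>"
  have iF: "F ** matrix_inv F = mat 1" using matrix_inv_works(1)[OF assms(1)] .
  then have iFt: "transpose (matrix_inv F) ** transpose F = mat 1"
    by (metis matrix_transpose_mul transpose_mat)
  have "F ** D ** transpose F ** matrix_inv B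
      = (-2 * lam) *\<^sub>R ((F ** matrix_inv F) ** N **
          (B ** (transpose (matrix_inv F) ** transpose F) ** matrix_inv B))"
    unfolding D N_def[symmetric] scalar_matrix_assoc[symmetric] matrix_scalar_ac
    by (simp only: matrix_mul_assoc)
  also have "\<dots> = (-2 * lam) *\<^sub>R N" using iF iFt matrix_inv_works(1)[OF assms(2)] by simp
  finally have "F ** D ** transpose F ** matrix_inv B = (-2 * lam) *\<^sub>R N" .
  moreover have "\<tau> \<bullet> N = norm (dev3 \<tau>)"
    unfolding N_def using inner_dev3_self[of \<tau>] assms(3) by (simp add: power2_eq_square)
  ultimately show ?thesis by simp
qed

theorem mainTheorem12:
  fixes W :: "real^3^3 \<Rightarrow> real" and \<Psi> :: "real^3 \<Rightarrow> real" and \<Psi>' :: "real^3 \<Rightarrow> real^3"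
    and F :: "real^3^3" and Cp :: "real \<Rightarrow> real^3^3" and t :: real and lam :: real
  assumes Psi_C1: "\<And>x. (\<forall>i. 0 < x $ i) \<Longrightarrow> (\<Psi> has_derivative (\<lambda>h. \<Psi>' x \<bullet> h)) (at x)"
    and Psi_C1_cont: "continuous_on {x. \<forall>i. 0 < x $ i} \<Psi>'"
    and W_repr: "\<And>G. det G > 0 \<Longrightarrow> W G = \<Psi> (invariants (transpose G ** G))"
    and W_iso: "\<And>G Q R. det G > 0 \<Longrightarrow> rotation_matrix Q \<Longrightarrow> rotation_matrix R \<Longrightarrow> W (Q ** G ** R) = W G"
    and F_pos: "det F > 0"
    and Cp_psym: "\<And>s. psym (Cp s)"
    and Cp_diff: "\<And>s. Cp differentiable (at s)"
  defines "C \<equiv> transpose F ** F"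
    and "Be \<equiv> (F ** matrix_inv (msqrt (Cp t))) ** transpose (F ** matrix_inv (msqrt (Cp t)))"
    and "\<tau> \<equiv> grad W (F ** matrix_inv (msqrt (Cp t))) ** transpose (F ** matrix_inv (msqrt (Cp t)))"
    and "DCpinv \<equiv> vector_derivative (\<lambda>s. matrix_inv (Cp s)) (at t)"
  shows "((\<lambda>s. Wtilde \<Psi> (C ** matrix_inv (Cp s))) has_real_derivative
            (1/2) * (\<tau> \<bullet> (F ** DCpinv ** transpose F ** matrix_inv Be))) (at t)
    \<and> ((dev3 \<tau> \<noteq> 0 \<and> lam \<ge> 0 \<and>
         DCpinv = (-2 * lam) *\<^sub>R (matrix_inv F ** (((1 / norm (dev3 \<tau>)) *\<^sub>R dev3 \<tau>) ** Be)
                                     ** transpose (matrix_inv F)))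
       \<longrightarrow> ((\<lambda>s. Wtilde \<Psi> (C ** matrix_inv (Cp s))) has_real_derivative
               (- lam * norm (dev3 \<tau>))) (at t)
           \<and> - lam * norm (dev3 \<tau>) \<le> 0)"
proof -
  define Fe where "Fe = F ** matrix_inv (msqrt (Cp t))"
  define h where "h = (\<lambda>X. \<Psi> (invariants X))"
  define L where "L = (\<lambda>K. \<Psi>' (invariants Be) \<bullet> frechet_derivative invariants (at Be) K)"
  define K where "K = F ** DCpinv ** transpose F"
  note kin = elastic_kinematics[OF F_pos Cp_psym[of t], folded Fe_def]
  have Be: "Be = Fe ** transpose Fe" "Be = F ** matrix_inv (Cp t) ** transpose F"
    unfolding Be_def Fe_def using kin(2) Fe_def by simp_all
  have h: "(h has_derivative L) (at Be)"
    unfolding h_def L_def using strain_energy_has_derivative[OF Psi_C1] kin(3) Be(1) by simp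
  \<comment> \<open>near \<open>F\<^sub>e\<close>, \<open>W(G) = h(G G\<^sup>T)\<close>\<close>
  have grad: "\<And>H. grad W Fe \<bullet> H = L (Fe ** transpose H + H ** transpose Fe)"
    using grad_via_left_Cauchy_Green[OF open_det_pos, of Fe W h] kin(1) h Be(1)
    by (simp add: W_repr h_def invariants_mult_commute)
  have "transpose K = K" unfolding K_def DCpinv_def
    using matrix_inv_curve_derivative(2)[OF Cp_psym Cp_diff, of t]
    by (simp add: matrix_transpose_mul matrix_mul_assoc)
  from stress_pairing[OF grad has_derivative_linear[OF h[unfolded Be(1)]] this] kin(1)
  have "\<tau> \<bullet> (K ** matrix_inv Be) = 2 * L K" unfolding \<tau>_def Fe_def[symmetric] Be(1) by simp
  moreover have "Wtilde \<Psi> (C ** matrix_inv (Cp s)) = h (F ** matrix_inv (Cp s) ** transpose F)" for s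
    unfolding Wtilde_def h_def C_def
    by (metis invariants_mult_commute matrix_mul_assoc)
  ultimately have rate: "((\<lambda>s. Wtilde \<Psi> (C ** matrix_inv (Cp s))) has_real_derivative
      (1/2) * (\<tau> \<bullet> (F ** DCpinv ** transpose F ** matrix_inv Be))) (at t)"
    using has_real_derivative_sandwich[OF matrix_inv_curve_derivative(1)[OF Cp_psym Cp_diff] h[unfolded Be(2)]]
    unfolding K_def DCpinv_def by simp
  have "det Be \<noteq> 0" using psym_det_nonzero kin(3) Be(1) by simp
  with rate show ?thesis
    using flow_rule_dissipation[of F Be \<tau> DCpinv lam] F_pos by auto
qed

end
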